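(* Let $\mathcal{F}$ be the set of all non-increasing functions $f:[0,1]\to\mathbb{R}$. Then $\mathsf{dis}(\mathcal{F}) \le 2$.
   Context: For a measurable space $\mathcal{X}$ and a class $\mathcal{F}$ of measurable functions $\mathcal{X}\to\mathbb{R}$, the disagreement coefficient is $$\mathsf{dis}(\mathcal{F}) = \sup_{\varepsilon,\delta>0}\ \sup_{\nu\in\Delta(\mathcal{X})} \frac{\delta^2}{\varepsilon^2}\,\mathbb{P}_{p\sim\nu}\Big(\exists f\in\mathcal{F}:\ \mathbb{E}_{q\sim\nu}[f(q)^2]\le\varepsilon^2\ \text{and}\ |f(p)|>\delta\Big),$$ where $\Delta(\mathcal{X})$ is the set of probability measures on $\mathcal{X}$. *)

theory Defs
  imports "HOL-Probability.Probability"
begin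

definition prob_measures :: "'a measure \<Rightarrow> 'a measure set" where
  "prob_measures X = {\<nu>. prob_space \<nu> \<and> sets \<nu> = sets X}"

definition dis :: "'a measure \<Rightarrow> ('a \<Rightarrow> real) set \<Rightarrow> ereal" where
  "dis X F = (SUP t \<in> {(\<epsilon>, \<delta>, \<nu>). \<epsilon> > 0 \<and> \<delta> > 0 \<and> \<nu> \<in> prob_measures X}.
      (case t of (\<epsilon>, \<delta>, \<nu>) \<Rightarrow>
        ereal (\<delta>\<^sup>2 / \<epsilon>\<^sup>2 * measure \<nu>
          {p \<in> space \<nu>. \<exists>f\<in>F. (\<integral>q. (f q)\<^sup>2 \<partial>\<nu>) \<le> \<epsilon>\<^sup>2 \<and> \<bar>f p\<bar> > \<delta>})))"

definition unit_interval :: "real measure" where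
  "unit_interval = restrict_space borel {0..1}"

definition nonincreasing_fns :: "(real \<Rightarrow> real) set" where
  "nonincreasing_fns = {f. \<forall>x\<in>{0..1}. \<forall>y\<in>{0..1}. x \<le> y \<longrightarrow> f y \<le> f x}"

end

theory Submission
  imports Defs
begin

text \<open>
  If a non-increasing f with \<open>\<integral>f\<^sup>2 d\<nu> \<le> \<epsilon>\<^sup>2\<close> has \<open>f p > \<delta>\<close>, then \<open>f > \<delta>\<close> on [0, p],
  so Chebyshev gives \<open>\<nu>[0, p] \<le> \<epsilon>\<^sup>2/\<delta>\<^sup>2\<close>; if \<open>f p < -\<delta>\<close>, then likewise
  \<open>\<nu>[p, 1] \<le> \<epsilon>\<^sup>2/\<delta>\<^sup>2\<close>. The union of all intervals [0, p] with \<open>\<nu>[0, p] \<le> \<epsilon>\<^sup>2/\<delta>\<^sup>2\<close>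
  is [0, a] or [0, a), and in the second case its mass is the limit of \<open>\<nu>[0, p]\<close>
  as p increases to a, hence again at most \<open>\<epsilon>\<^sup>2/\<delta>\<^sup>2\<close>. The same holds for the
  intervals [p, 1], so the disagreement region has mass at most \<open>2\<epsilon>\<^sup>2/\<delta>\<^sup>2\<close>.
\<close>

lemma is_interval_UN_atMost: "is_interval (\<Union>p\<in>A. {..p::real})"
  by (auto simp: is_interval_1) (meson order_trans)

lemma (in finite_borel_measure) measure_UN_atMost_le:
  assumes "bdd_above A" and "0 \<le> c" and bound: "\<And>p. p \<in> A \<Longrightarrow> measure M {..p} \<le> c"
  shows "measure M (\<Union>p\<in>A. {..p}) \<le> c"
proof (cases "A = {}")
  case True
  then show ?thesis using \<open>0 \<le> c\<close> by simp
next
  case False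
  define a where "a = Sup A"
  have below_a: "p \<le> a" if "p \<in> A" for p
    unfolding a_def by (rule cSup_upper[OF that \<open>bdd_above A\<close>])
  show ?thesis
  proof (cases "a \<in> A")
    case True
    then have "(\<Union>p\<in>A. {..p}) = {..a}" using below_a by fastforce
    then show ?thesis using bound[OF True] by simp
  next
    case False
    have above_x: "\<exists>p\<in>A. x < p" if "x < a" for x
      using that less_cSup_iff[OF \<open>A \<noteq> {}\<close> \<open>bdd_above A\<close>] unfolding a_def by blast
    have cdf_le: "cdf M x \<le> c" if "x < a" for x
    proof -
      obtain p where "p \<in> A" "x < p" using above_x[OF \<open>x < a\<close>] by blast
      then have "cdf M x \<le> cdf M p" by (intro cdf_nondecreasing) simp
      then show ?thesis using bound[OF \<open>p \<in> A\<close>] by (simp add: cdf_def2)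
    qed
    have below_strict: "p < a" if "p \<in> A" for p
      using below_a[OF that] False that by (cases "p = a") auto
    have "(\<Union>p\<in>A. {..p}) = {..<a}"
      using below_strict above_x by (auto intro: le_less_trans) (meson less_imp_le)
    moreover have "measure M {..<a} \<le> c"
      by (rule tendsto_upperbound[OF cdf_at_left]) (auto simp: eventually_at_filter cdf_le)
    ultimately show ?thesis by simp
  qed
qed

lemma sublevel_union_in_sets:
  fixes g :: "'a \<Rightarrow> real"
  assumes "g \<in> borel_measurable M"
  shows "{x \<in> space M. \<exists>p\<in>A. g x \<le> p} \<in> sets M"
proof -
  have "{x \<in> space M. \<exists>p\<in>A. g x \<le> p} = g -` (\<Union>p\<in>A. {..p}) \<inter> space M"
    by auto
  then show ?thesis
    using assms real_interval_borel_measurable[OF is_interval_UN_atMost]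
    by (simp add: measurable_sets)
qed

lemma (in finite_measure) measure_sublevel_union_le:
  fixes g :: "'a \<Rightarrow> real"
  assumes g: "g \<in> borel_measurable M" and "bdd_above A" and "0 \<le> c"
    and bound: "\<And>p. p \<in> A \<Longrightarrow> measure M {x \<in> space M. g x \<le> p} \<le> c"
  shows "measure M {x \<in> space M. \<exists>p\<in>A. g x \<le> p} \<le> c"
proof -
  interpret image: finite_borel_measure "distr M borel g"
    using finite_measure_distr[OF g]
    by (simp add: finite_borel_measure_def finite_borel_measure_axioms_def)
  have distr_eq: "measure (distr M borel g) S = measure M (g -` S \<inter> space M)"
    if "S \<in> sets borel" for S
    using that g by (simp add: measure_distr)
  have "measure (distr M borel g) (\<Union>p\<in>A. {..p}) \<le> c"
  proof (rule image.measure_UN_atMost_le[OF \<open>bdd_above A\<close> \<open>0 \<le> c\<close>])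
    fix p assume "p \<in> A"
    have "g -` {..p} \<inter> space M = {x \<in> space M. g x \<le> p}" by auto
    then show "measure (distr M borel g) {..p} \<le> c"
      using bound[OF \<open>p \<in> A\<close>] by (simp add: distr_eq)
  qed
  moreover have "g -` (\<Union>p\<in>A. {..p}) \<inter> space M = {x \<in> space M. \<exists>p\<in>A. g x \<le> p}"
    by auto
  ultimately show ?thesis
    using real_interval_borel_measurable[OF is_interval_UN_atMost] by (simp add: distr_eq)
qed

lemma space_unit_interval: "space unit_interval = {0..1}"
  by (simp add: unit_interval_def space_restrict_space)

lemma nonincreasing_fns_measurable:
  assumes "f \<in> nonincreasing_fns"
  shows "f \<in> borel_measurable unit_interval"
proof -
  have "mono_on {0..1} (\<lambda>x. - f x)"
    using assms unfolding nonincreasing_fns_def mono_on_def by auto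
  then have "(\<lambda>x. - f x) \<in> borel_measurable unit_interval"
    unfolding unit_interval_def by (rule borel_measurable_mono_on_fnc)
  then show ?thesis
    using borel_measurable_uminus by fastforce
qed

lemma nonincreasing_fns_abs_le:
  assumes "f \<in> nonincreasing_fns" and "x \<in> {0..1}"
  shows "\<bar>f x\<bar> \<le> max \<bar>f 0\<bar> \<bar>f 1\<bar>"
proof -
  have "f 1 \<le> f x" "f x \<le> f 0"
    using assms unfolding nonincreasing_fns_def by auto
  then show ?thesis by linarith
qed

lemma integrable_square_nonincreasing:
  assumes "finite_measure \<nu>" and sets: "sets \<nu> = sets unit_interval"
    and f: "f \<in> nonincreasing_fns"
  shows "integrable \<nu> (\<lambda>x. (f x)\<^sup>2)"
proof (rule finite_measure.integrable_const_bound[OF \<open>finite_measure \<nu>\<close>])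
  have "space \<nu> = {0..1}"
    using sets_eq_imp_space_eq[OF sets] by (simp add: space_unit_interval)
  then have "norm ((f x)\<^sup>2) \<le> (max \<bar>f 0\<bar> \<bar>f 1\<bar>)\<^sup>2" if "x \<in> space \<nu>" for x
    using nonincreasing_fns_abs_le[OF f, of x] that
    by (metis abs_ge_zero abs_power2 power_mono real_norm_def power2_abs)
  then show "AE x in \<nu>. norm ((f x)\<^sup>2) \<le> (max \<bar>f 0\<bar> \<bar>f 1\<bar>)\<^sup>2"
    by (rule AE_I2)
  have "f \<in> borel_measurable \<nu>"
    using nonincreasing_fns_measurable[OF f] by (simp add: measurable_cong_sets[OF sets refl])
  then show "(\<lambda>x. (f x)\<^sup>2) \<in> borel_measurable \<nu>"
    by simp
qed

lemma measure_le_second_moment: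
  assumes "finite_measure \<nu>" and sets: "sets \<nu> = sets unit_interval"
    and f: "f \<in> nonincreasing_fns" and "0 < \<delta>"
    and T: "T \<subseteq> space \<nu>" "\<And>x. x \<in> T \<Longrightarrow> \<delta> \<le> \<bar>f x\<bar>"
  shows "measure \<nu> T \<le> (\<integral>x. (f x)\<^sup>2 \<partial>\<nu>) / \<delta>\<^sup>2"
proof -
  interpret finite_measure \<nu> by fact
  have f_meas: "f \<in> borel_measurable \<nu>"
    using nonincreasing_fns_measurable[OF f] measurable_cong_sets[OF sets refl] by blast
  have "measure \<nu> T \<le> measure \<nu> {x \<in> space \<nu>. \<bar>f x\<bar> \<ge> \<delta>}"
    using T f_meas by (intro finite_measure_mono) auto
  also have "\<dots> \<le> (\<integral>x. (f x)\<^sup>2 \<partial>\<nu>) / \<delta>\<^sup>2"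
    using f_meas integrable_square_nonincreasing[OF assms(1-3)] \<open>0 < \<delta>\<close>
    by (intro second_moment_method) auto
  finally show ?thesis .
qed

lemma nonincreasing_tail_measure_le:
  assumes "finite_measure \<nu>" and sets: "sets \<nu> = sets unit_interval"
    and f: "f \<in> nonincreasing_fns" "(\<integral>q. (f q)\<^sup>2 \<partial>\<nu>) \<le> \<epsilon>\<^sup>2"
    and p: "p \<in> {0..1}" and "0 < \<delta>" "\<delta> < \<bar>f p\<bar>"
  shows "measure \<nu> {x \<in> space \<nu>. x \<le> p} \<le> \<epsilon>\<^sup>2 / \<delta>\<^sup>2
    \<or> measure \<nu> {x \<in> space \<nu>. p \<le> x} \<le> \<epsilon>\<^sup>2 / \<delta>\<^sup>2"
proof -
  have space: "space \<nu> = {0..1}"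
    using sets_eq_imp_space_eq[OF sets] by (simp add: space_unit_interval)
  have bound: "measure \<nu> T \<le> \<epsilon>\<^sup>2 / \<delta>\<^sup>2"
    if T: "T \<subseteq> space \<nu>" "\<And>x. x \<in> T \<Longrightarrow> \<delta> \<le> \<bar>f x\<bar>" for T
  proof -
    have "measure \<nu> T \<le> (\<integral>q. (f q)\<^sup>2 \<partial>\<nu>) / \<delta>\<^sup>2"
      by (rule measure_le_second_moment[OF assms(1) sets f(1) \<open>0 < \<delta>\<close> T])
    also have "\<dots> \<le> \<epsilon>\<^sup>2 / \<delta>\<^sup>2"
      using f(2) by (simp add: divide_right_mono)
    finally show ?thesis .
  qed
  have mono: "f y \<le> f x" if "x \<le> y" "x \<in> {0..1}" "y \<in> {0..1}" for x y
    using f(1) that unfolding nonincreasing_fns_def by auto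
  consider "f p > \<delta>" | "f p < - \<delta>" using \<open>\<delta> < \<bar>f p\<bar>\<close> by linarith
  then show ?thesis
  proof cases
    case 1
    then have "measure \<nu> {x \<in> space \<nu>. x \<le> p} \<le> \<epsilon>\<^sup>2 / \<delta>\<^sup>2"
      using mono p space by (intro bound) force+
    then show ?thesis ..
  next
    case 2
    then have "measure \<nu> {x \<in> space \<nu>. p \<le> x} \<le> \<epsilon>\<^sup>2 / \<delta>\<^sup>2"
      using mono p space by (intro bound) force+
    then show ?thesis ..
  qed
qed

lemma disagreement_region_measure_le:
  assumes \<nu>: "\<nu> \<in> prob_measures unit_interval" and "0 < \<delta>"
  shows "measure \<nu> {p \<in> space \<nu>. \<exists>f\<in>nonincreasing_fns.
           (\<integral>q. (f q)\<^sup>2 \<partial>\<nu>) \<le> \<epsilon>\<^sup>2 \<and> \<bar>f p\<bar> > \<delta>} \<le> 2 * (\<epsilon>\<^sup>2 / \<delta>\<^sup>2)"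
    (is "measure \<nu> ?S \<le> _")
proof -
  interpret prob_space \<nu> using \<nu> by (simp add: prob_measures_def)
  have sets: "sets \<nu> = sets unit_interval" using \<nu> by (simp add: prob_measures_def)
  have space: "space \<nu> = {0..1}"
    using sets_eq_imp_space_eq[OF sets] by (simp add: space_unit_interval)
  define c where "c = \<epsilon>\<^sup>2 / \<delta>\<^sup>2"
  define L where "L = {p \<in> {0..1}. measure \<nu> {x \<in> space \<nu>. x \<le> p} \<le> c}"
  define R where "R = {q \<in> {-1..0}. measure \<nu> {x \<in> space \<nu>. - x \<le> q} \<le> c}"
  let ?left = "{x \<in> space \<nu>. \<exists>p\<in>L. x \<le> p}"
  let ?right = "{x \<in> space \<nu>. \<exists>q\<in>R. - x \<le> q}"
  have id_meas: "(\<lambda>x. x) \<in> borel_measurable \<nu>"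
    and neg_meas: "(\<lambda>x. - x) \<in> borel_measurable \<nu>"
    unfolding measurable_cong_sets[OF sets refl] unit_interval_def
    by (auto intro: measurable_restrict_space1)
  have "bdd_above L" "bdd_above R"
    unfolding L_def R_def by (auto intro: bdd_aboveI)
  moreover have "0 \<le> c"
    unfolding c_def by simp
  ultimately have "measure \<nu> ?left \<le> c" "measure \<nu> ?right \<le> c"
    using measure_sublevel_union_le[OF id_meas] measure_sublevel_union_le[OF neg_meas]
    unfolding L_def R_def by blast+
  have "?S \<subseteq> ?left \<union> ?right"
  proof
    fix p assume "p \<in> ?S"
    then obtain f where "p \<in> {0..1}" "f \<in> nonincreasing_fns"
      "(\<integral>q. (f q)\<^sup>2 \<partial>\<nu>) \<le> \<epsilon>\<^sup>2" "\<bar>f p\<bar> > \<delta>"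
      using space by auto
    then have "p \<in> L \<or> - p \<in> R"
      using nonincreasing_tail_measure_le[OF _ sets, of f \<epsilon> p \<delta>] \<open>0 < \<delta>\<close>
      unfolding L_def R_def c_def by (auto intro: finite_measure_axioms)
    then show "p \<in> ?left \<union> ?right"
      using \<open>p \<in> {0..1}\<close> space by force
  qed
  then have "measure \<nu> ?S \<le> measure \<nu> (?left \<union> ?right)"
    using sublevel_union_in_sets[OF id_meas] sublevel_union_in_sets[OF neg_meas]
    by (intro finite_measure_mono) auto
  also have "\<dots> \<le> measure \<nu> ?left + measure \<nu> ?right"
    using sublevel_union_in_sets[OF id_meas] sublevel_union_in_sets[OF neg_meas]
    by (intro measure_Un_le) auto
  finally show ?thesis
    using \<open>measure \<nu> ?left \<le> c\<close> \<open>measure \<nu> ?right \<le> c\<close> unfolding c_def by linarith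
qed

theorem mainTheorem3:
  shows "dis unit_interval nonincreasing_fns \<le> 2"
  unfolding dis_def
proof (rule SUP_least, clarify)
  fix \<epsilon> \<delta> :: real and \<nu>
  assume "0 < \<epsilon>" "0 < \<delta>" and \<nu>: "\<nu> \<in> prob_measures unit_interval"
  let ?S = "{p \<in> space \<nu>. \<exists>f\<in>nonincreasing_fns. (\<integral>q. (f q)\<^sup>2 \<partial>\<nu>) \<le> \<epsilon>\<^sup>2 \<and> \<bar>f p\<bar> > \<delta>}"
  have "\<delta>\<^sup>2 / \<epsilon>\<^sup>2 * measure \<nu> ?S \<le> \<delta>\<^sup>2 / \<epsilon>\<^sup>2 * (2 * (\<epsilon>\<^sup>2 / \<delta>\<^sup>2))"
    using disagreement_region_measure_le[OF \<nu> \<open>0 < \<delta>\<close>, where \<epsilon> = \<epsilon>]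
    by (intro mult_left_mono) simp_all
  also have "\<dots> = 2"
    using \<open>0 < \<epsilon>\<close> \<open>0 < \<delta>\<close> by (simp add: field_simps)
  finally show "ereal (\<delta>\<^sup>2 / \<epsilon>\<^sup>2 * measure \<nu> ?S) \<le> 2" by simp
qed

end
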